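(* Let $k\in\,]0,2]$, $M>0$, $\beta\in\,]0,\tfrac12[$, $0<\sigma_0\le\min\{1,\frac{3\beta^3}{4\pi M^2}\}$ and $I=\inf_{f\in\mathcal A}\mathcal D(f)$. Let $h\in\mathcal A$ with $\mathcal D(h)<0$ and let $\delta>0$ be such that $|\mathcal D(h)|\ge M+\delta$. Define $\eta=\min\{1,\frac{\delta}{6M}\}$ and take $$R\ge\max\Big\{\frac{8M}{3},\frac{2M}{1-\frac{1}{(1+\frac{\delta}{6M})^2}}\Big\}.$$ If $g\in\mathcal A$ satisfies $g\le1$, $\mathcal D(g)\le I+\eta\,\Delta M$ and $\Delta M\in\,]0,M[$, where $\Delta M=\int_{|x|\ge R}\int_{\mathbb R^3}\sqrt{1+|v|^2}g\,dx\,dv$, then $\Delta M\ge\frac{\delta}{18}$. In particular, if $(f_n)\subset\mathcal A$ is a sequence with $\lim_{n\to\infty}\mathcal D(f_n)=I$, $f_n\le1$, and $\lim_{n\to\infty}(\Delta M)_n=\varepsilon_0$ for some $\varepsilon_0\in\,]0,M[$, where $(\Delta M)_n=\int_{|x|\ge R_n}\int_{\mathbb R^3}\sqrt{1+|v|^2}f_n\,dx\,dv$ with $R_n\ge\max\{\frac{8M}{3},\frac{2M}{1-(1+\frac{\delta}{6M})^{-2}}\}$, then $\varepsilon_0\ge\frac{\delta}{18}$.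
   Context: Let $\chi(s)=\frac{k}{k+1}s^{1+1/k}$. A measurable $f\ge0$ on $\mathbb R^3\times\mathbb R^3$ is spherically symmetric if $f(Ax,Av)=f(x,v)$ for all $A\in SO(3)$. For such $f$: $\rho_f(x)=\int\sqrt{1+|v|^2}f(x,v)\,dv$ (radial, written $\rho_f(r)$), $m_f(r)=\int_{|x|\le r}\int\sqrt{1+|v|^2}f\,dx\,dv$, $\lambda_f$ given by $e^{-2\lambda_f(r)}=1-2m_f(r)/r$, and $\mathcal D(f)=\int\int e^{\lambda_f(|x|)}(\chi(f)-f)\,dx\,dv$. $\mathcal A$ is the set of measurable spherically symmetric $f\ge0$ with $\int\int\sqrt{1+|v|^2}f\,dx\,dv=M$ and $\rho_f(r)\le\sigma_0$ for all $r\ge0$. *)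

theory Defs
  imports "HOL-Analysis.Analysis"
begin

type_synonym vec3 = "real ^ 3"
type_synonym distrib = "vec3 \<Rightarrow> vec3 \<Rightarrow> real"

definition chi :: "real \<Rightarrow> real \<Rightarrow> real" where
  "chi k s = k / (k + 1) * s powr (1 + 1 / k)"

definition SO3 :: "(real ^ 3 ^ 3) set" where
  "SO3 = {A. orthogonal_matrix A \<and> det A = 1}"

definition spherically_symmetric :: "distrib \<Rightarrow> bool" where
  "spherically_symmetric f \<longleftrightarrow> (\<forall>A\<in>SO3. \<forall>x v. f (A *v x) (A *v v) = f x v)"

definition rho :: "distrib \<Rightarrow> vec3 \<Rightarrow> ennreal" where
  "rho f x = (\<integral>\<^sup>+ v. ennreal (sqrt (1 + (norm v)\<^sup>2) * f x v) \<partial>lborel)"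

definition mass :: "distrib \<Rightarrow> ennreal" where
  "mass f = (\<integral>\<^sup>+ x. rho f x \<partial>lborel)"

definition m_enc :: "distrib \<Rightarrow> real \<Rightarrow> ennreal" where
  "m_enc f r = (\<integral>\<^sup>+ x. indicator {x. norm x \<le> r} x * rho f x \<partial>lborel)"

text \<open>lambda_f with exp(-2 lambda_f(r)) = 1 - 2 m_f(r)/r (at r = 0, m_f(0)/0 = 0 so lambda_f(0) = 0)\<close>
definition lambda_f :: "distrib \<Rightarrow> real \<Rightarrow> real" where
  "lambda_f f r = - (1/2) * ln (1 - 2 * enn2real (m_enc f r) / r)"

text \<open>D(f) = int int e^{lambda_f(|x|)} (chi(f) - f) dx dv, taken as difference of the two
  (nonnegative) integrals, in the extended reals\<close>
definition Dfun :: "real \<Rightarrow> distrib \<Rightarrow> ereal" where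
  "Dfun k f =
     enn2ereal (\<integral>\<^sup>+ x. \<integral>\<^sup>+ v. ennreal (exp (lambda_f f (norm x)) * chi k (f x v)) \<partial>lborel \<partial>lborel)
   - enn2ereal (\<integral>\<^sup>+ x. \<integral>\<^sup>+ v. ennreal (exp (lambda_f f (norm x)) * f x v) \<partial>lborel \<partial>lborel)"

definition admissible :: "real \<Rightarrow> real \<Rightarrow> distrib set" where
  "admissible M \<sigma>0 = {f. (\<lambda>(x, v). f x v) \<in> borel_measurable (lborel \<Otimes>\<^sub>M lborel)
      \<and> (\<forall>x v. 0 \<le> f x v) \<and> spherically_symmetric f
      \<and> mass f = ennreal M \<and> (\<forall>x. rho f x \<le> ennreal \<sigma>0)}"

definition DeltaM :: "real \<Rightarrow> distrib \<Rightarrow> real" where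
  "DeltaM R g = enn2real (\<integral>\<^sup>+ x. indicator {x. R \<le> norm x} x * rho g x \<partial>lborel)"

end

theory Submission
  imports Defs
begin

(* Cut a near-minimizer g off at radius R and dilate what is left, x -> a x with
   a^3 = M / (M - Delta M), back to mass M.  A dilation by a >= 1 can only increase
   e^lambda, and as chi(g) <= g this can only lower D, so D(rescaled) <= a^3 D(cut).
   Beyond R we have e^lambda <= 1 + delta/(6M), so the cut removes at most
   (1 + delta/(6M)) Delta M of negative energy.  Hence
   I <= a^3 (D(g) + (1 + delta/(6M)) Delta M) <= a^3 (I + (eta + 1 + delta/(6M)) Delta M),
   which rearranges to -I <= M + delta/3, contradicting -I >= M + delta.  Thus no such g
   has 0 < Delta M < M at all and the bound Delta M >= delta/18 holds vacuously; for the
   sequence one f_n far enough out is such a g. *)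

lemma enn2ereal_eq_ereal_enn2real: "x < top \<Longrightarrow> enn2ereal x = ereal (enn2real x)"
  by (metis enn2ereal_ennreal enn2real_nonneg ennreal_enn2real less_top)

lemma nn_integral_add_le_add:
  assumes [measurable]: "A \<in> borel_measurable M" "B \<in> borel_measurable M"
    "C \<in> borel_measurable M" "D \<in> borel_measurable M"
    and "\<And>x. A x + B x \<le> C x + D x"
  shows "(\<integral>\<^sup>+x. A x \<partial>M) + (\<integral>\<^sup>+x. B x \<partial>M) \<le> (\<integral>\<^sup>+x. C x \<partial>M) + (\<integral>\<^sup>+x. D x \<partial>M)"
  using assms(5) by (simp add: nn_integral_add[symmetric] nn_integral_mono)

lemma nn_integral_dilate:
  fixes F :: "'a::euclidean_space \<Rightarrow> ennreal"
  assumes [measurable]: "F \<in> borel_measurable borel" and a: "0 < a"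
  shows "(\<integral>\<^sup>+x. F (x /\<^sub>R a) \<partial>lborel) = ennreal (a ^ DIM('a)) * (\<integral>\<^sup>+x. F x \<partial>lborel)"
proof -
  have "(\<integral>\<^sup>+x. F (x /\<^sub>R a) \<partial>lborel)
      = (\<integral>\<^sup>+x. F (x /\<^sub>R a) \<partial>density (distr lborel borel (\<lambda>x. 0 + a *\<^sub>R x)) (\<lambda>_. \<bar>a\<bar> ^ DIM('a)))"
    using lborel_affine[of a "0::'a"] a by simp
  also have "\<dots> = ennreal (a ^ DIM('a)) * (\<integral>\<^sup>+x. F x \<partial>lborel)"
    using a by (simp add: nn_integral_density nn_integral_distr nn_integral_cmult)
  finally show ?thesis .
qed

lemma chi_zero [simp]: "chi k 0 = 0"
  by (simp add: chi_def)

lemma chi_nonneg: "0 \<le> k \<Longrightarrow> 0 \<le> chi k s"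
  by (simp add: chi_def)

lemma chi_le_self:
  assumes "0 < k" "0 \<le> s" "s \<le> 1"
  shows "chi k s \<le> s"
proof (cases "s = 0")
  case False
  have "s powr (1 + 1/k) \<le> s powr 1"
    using assms False by (intro powr_mono') auto
  moreover have "k / (k + 1) \<le> 1"
    using assms by simp
  ultimately have "k / (k + 1) * s powr (1 + 1/k) \<le> 1 * s powr 1"
    by (intro mult_mono) auto
  then show ?thesis
    using assms False by (simp add: chi_def)
qed simp

lemma borel_measurable_chi [measurable]: "chi k \<in> borel_measurable borel"
  unfolding chi_def[abs_def] by measurable

lemma borel_measurable_rho:
  assumes [measurable]: "(\<lambda>(x, v). f x v) \<in> borel_measurable (lborel \<Otimes>\<^sub>M lborel)"
  shows "rho f \<in> borel_measurable lborel"
  unfolding rho_def[abs_def] by measurable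

lemma m_enc_mono: "r \<le> s \<Longrightarrow> m_enc f r \<le> m_enc f s"
  unfolding m_enc_def by (intro nn_integral_mono) (auto simp: indicator_def)

lemma m_enc_le_mass: "m_enc f r \<le> mass f"
  unfolding m_enc_def mass_def by (intro nn_integral_mono) (auto simp: indicator_def)

lemma borel_measurable_lambda_f:
  assumes "mass f < top"
  shows "lambda_f f \<in> borel_measurable borel"
proof -
  have "mono (\<lambda>r. enn2real (m_enc f r))"
  proof (rule monoI)
    fix r s :: real assume "r \<le> s"
    moreover have "m_enc f s < top"
      using m_enc_le_mass assms by (rule le_less_trans)
    ultimately show "enn2real (m_enc f r) \<le> enn2real (m_enc f s)"
      by (intro enn2real_mono m_enc_mono)
  qed
  then have [measurable]: "(\<lambda>r. enn2real (m_enc f r)) \<in> borel_measurable borel"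
    by (rule borel_measurable_mono)
  show ?thesis
    unfolding lambda_f_def[abs_def] by measurable
qed

definition exp_lambda :: "distrib \<Rightarrow> vec3 \<Rightarrow> real" where
  "exp_lambda f x = exp (lambda_f f (norm x))"

lemma exp_lambda_nonneg: "0 \<le> exp_lambda f x"
  by (simp add: exp_lambda_def)

lemma borel_measurable_exp_lambda:
  "mass f < top \<Longrightarrow> exp_lambda f \<in> borel_measurable lborel"
  using borel_measurable_lambda_f[of f] unfolding exp_lambda_def[abs_def] by measurable

definition subcritical :: "real \<Rightarrow> distrib \<Rightarrow> bool" where
  "subcritical \<beta> f \<longleftrightarrow> (\<forall>r>0. enn2real (m_enc f r) \<le> \<beta> * r)"

lemma subcritical_if_density_bounded:
  assumes M: "0 < M" and \<beta>: "0 < \<beta>" and \<sigma>: "0 \<le> \<sigma>0" "\<sigma>0 \<le> 3 * \<beta>^3 / (4 * pi * M^2)"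
    and mass: "mass f \<le> ennreal M" and rho: "\<And>x. rho f x \<le> ennreal \<sigma>0"
  shows "subcritical \<beta> f"
  unfolding subcritical_def
proof (intro allI impI)
  fix r :: real assume r: "0 < r"
  have by_mass: "enn2real (m_enc f r) \<le> M"
    using m_enc_le_mass[of f r] mass M by (intro enn2real_leI) auto
  have "m_enc f r \<le> (\<integral>\<^sup>+x. ennreal \<sigma>0 * indicator (cball (0::vec3) r) x \<partial>lborel)"
    unfolding m_enc_def by (intro nn_integral_mono) (auto simp: indicator_def rho)
  also have "\<dots> = ennreal \<sigma>0 * ennreal (4/3 * pi * r^3)"
    using r by (simp add: nn_integral_cmult_indicator emeasure_cball unit_ball_vol_3 mult.commute)
  also have "\<dots> = ennreal (\<sigma>0 * (4/3 * pi * r^3))"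
    by (rule ennreal_mult[symmetric]) (use r \<sigma> in auto)
  finally have by_volume: "enn2real (m_enc f r) \<le> \<sigma>0 * (4/3 * pi * r^3)"
    using \<sigma> r by (intro enn2real_leI) auto
  show "enn2real (m_enc f r) \<le> \<beta> * r"
  proof (cases "M \<le> \<beta> * r")
    case False
    have "\<sigma>0 * (4/3 * pi * r^3) \<le> 3 * \<beta>^3 / (4 * pi * M^2) * (4/3 * pi * r^3)"
      using \<sigma> r by (intro mult_right_mono) auto
    also have "\<dots> = (\<beta> * r) * ((\<beta> * r) / M)^2"
      using M by (simp add: field_simps power2_eq_square power3_eq_cube)
    also have "\<dots> \<le> \<beta> * r"
      using False \<beta> r M by (simp add: mult_left_le power_le_one)
    finally show ?thesis
      using by_volume by linarith
  qed (use by_mass in linarith)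
qed

lemma exp_lambda_le:
  assumes f: "subcritical \<beta> f" and \<beta>: "0 \<le> \<beta>" "\<beta> < 1/2"
  shows "exp_lambda f x \<le> 1 / sqrt (1 - 2 * \<beta>)"
proof -
  have "ln (1 - 2 * \<beta>) \<le> ln (1 - 2 * enn2real (m_enc f (norm x)) / norm x)"
  proof (cases "x = 0")
    case False
    then have "enn2real (m_enc f (norm x)) \<le> \<beta> * norm x"
      using f by (simp add: subcritical_def)
    then have "2 * enn2real (m_enc f (norm x)) / norm x \<le> 2 * \<beta>"
      using False by (simp add: divide_le_eq)
    then show ?thesis
      using \<beta> by simp
  qed (use \<beta> in simp)
  then have "lambda_f f (norm x) \<le> - (1/2) * ln (1 - 2 * \<beta>)"
    by (simp add: lambda_f_def)
  then have "exp_lambda f x \<le> exp (- (1/2) * ln (1 - 2 * \<beta>))"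
    by (simp add: exp_lambda_def)
  also have "\<dots> = (1 - 2 * \<beta>) powr (- (1/2))"
    using \<beta> by (simp add: powr_def)
  also have "\<dots> = 1 / sqrt (1 - 2 * \<beta>)"
    using \<beta> by (simp add: powr_minus_divide powr_half_sqrt)
  finally show ?thesis .
qed

lemma exp_lambda_le_outside:
  assumes M: "0 \<le> M" and q: "1 < q" and mass: "mass f \<le> ennreal M"
    and R: "2 * M / (1 - 1 / q^2) \<le> R" "0 < R" and x: "R \<le> norm x"
  shows "exp_lambda f x \<le> q"
proof -
  have q2: "0 < 1 - 1 / q^2"
    using q by (simp add: power_one_over[symmetric] power_less_one_iff)
  have m: "enn2real (m_enc f (norm x)) \<le> M"
    using m_enc_le_mass[of f "norm x"] mass M by (intro enn2real_leI) auto
  have "2 * enn2real (m_enc f (norm x)) / norm x \<le> 2 * M / R"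
    using m R x M by (intro frac_le) auto
  also have "\<dots> \<le> 1 - 1 / q^2"
    using R q2 by (simp add: pos_divide_le_eq pos_le_divide_eq mult.commute)
  finally have "ln (1 / q^2) \<le> ln (1 - 2 * enn2real (m_enc f (norm x)) / norm x)"
    by (intro ln_mono) (use q in auto)
  moreover have "ln (1 / q^2) = - 2 * ln q"
    using q by (simp add: ln_div ln_realpow)
  ultimately have "lambda_f f (norm x) \<le> ln q"
    by (simp add: lambda_f_def)
  then show ?thesis
    using q by (simp add: exp_lambda_def exp_le_cancel_iff[symmetric, of _ "ln q"] del: exp_le_cancel_iff)
qed

definition weighted_integral :: "(real \<Rightarrow> real) \<Rightarrow> (vec3 \<Rightarrow> real) \<Rightarrow> distrib \<Rightarrow> ennreal" where
  "weighted_integral \<phi> E f = (\<integral>\<^sup>+x. \<integral>\<^sup>+v. ennreal (E x * \<phi> (f x v)) \<partial>lborel \<partial>lborel)"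

lemma Dfun_eq_weighted_integral:
  "Dfun k f = enn2ereal (weighted_integral (chi k) (exp_lambda f) f)
            - enn2ereal (weighted_integral (\<lambda>s. s) (exp_lambda f) f)"
  by (simp add: Dfun_def weighted_integral_def exp_lambda_def)

lemma Dfun_eq_ereal:
  assumes "weighted_integral (chi k) (exp_lambda f) f < top"
    and "weighted_integral (\<lambda>s. s) (exp_lambda f) f < top"
  shows "Dfun k f = ereal (enn2real (weighted_integral (chi k) (exp_lambda f) f)
                         - enn2real (weighted_integral (\<lambda>s. s) (exp_lambda f) f))"
  using assms by (simp add: Dfun_eq_weighted_integral enn2ereal_eq_ereal_enn2real)

lemma weighted_integral_mono:
  "(\<And>x v. E x * \<phi> (f x v) \<le> E' x * \<psi> (f x v)) \<Longrightarrow> weighted_integral \<phi> E f \<le> weighted_integral \<psi> E' f"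
  unfolding weighted_integral_def by (intro nn_integral_mono ennreal_leI)

lemma weighted_integral_chi_le:
  assumes "0 < k" "\<And>x. 0 \<le> E x" "\<And>x v. 0 \<le> f x v" "\<And>x v. f x v \<le> 1"
  shows "weighted_integral (chi k) E f \<le> weighted_integral (\<lambda>s. s) E f"
  using assms by (intro weighted_integral_mono mult_left_mono chi_le_self)

lemma weighted_integral_le_mass:
  assumes [measurable]: "(\<lambda>(x, v). f x v) \<in> borel_measurable (lborel \<Otimes>\<^sub>M lborel)"
    and f: "\<And>x v. 0 \<le> f x v" and E: "\<And>x. 0 \<le> E x" "\<And>x v. 0 < f x v \<Longrightarrow> E x \<le> c"
  shows "weighted_integral (\<lambda>s. s) E f \<le> ennreal c * mass f"
proof -
  have "ennreal (E x * f x v) \<le> ennreal c * ennreal (sqrt (1 + (norm v)\<^sup>2) * f x v)" for x v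
  proof (cases "f x v = 0")
    case False
    then have c: "0 \<le> E x" "E x \<le> c"
      using f[of x v] E by (auto simp: less_le)
    have "E x * f x v \<le> c * (sqrt (1 + (norm v)\<^sup>2) * f x v)"
      using c f[of x v] mult_right_mono[of 1 "sqrt (1 + (norm v)\<^sup>2)" "f x v"]
      by (intro mult_mono) auto
    then show ?thesis
      using c by (simp add: ennreal_mult'[symmetric] ennreal_leI)
  qed simp
  then have "weighted_integral (\<lambda>s. s) E f
      \<le> (\<integral>\<^sup>+x. \<integral>\<^sup>+v. ennreal c * ennreal (sqrt (1 + (norm v)\<^sup>2) * f x v) \<partial>lborel \<partial>lborel)"
    unfolding weighted_integral_def by (intro nn_integral_mono)
  also have "\<dots> = ennreal c * mass f"
    by (simp add: mass_def rho_def nn_integral_cmult)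
  finally show ?thesis .
qed

lemma weighted_integral_rearrange:
  assumes k: "0 < k"
    and [measurable]: "(\<lambda>(x, v). f x v) \<in> borel_measurable (lborel \<Otimes>\<^sub>M lborel)"
    and f: "\<And>x v. 0 \<le> f x v" "\<And>x v. f x v \<le> 1"
    and [measurable]: "E1 \<in> borel_measurable lborel" "E2 \<in> borel_measurable lborel"
    and E: "\<And>x. 0 \<le> E1 x" "\<And>x. E1 x \<le> E2 x"
  shows "weighted_integral (chi k) E2 f + weighted_integral (\<lambda>s. s) E1 f
       \<le> weighted_integral (chi k) E1 f + weighted_integral (\<lambda>s. s) E2 f"
proof -
  have "ennreal (E2 x * chi k (f x v)) + ennreal (E1 x * f x v)
      \<le> ennreal (E1 x * chi k (f x v)) + ennreal (E2 x * f x v)" for x v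
  proof -
    have c: "0 \<le> chi k (f x v)" "chi k (f x v) \<le> f x v"
      using k f by (auto intro: chi_nonneg chi_le_self)
    have "0 \<le> (E2 x - E1 x) * (f x v - chi k (f x v))"
      using c E[of x] by simp
    then have "E2 x * chi k (f x v) + E1 x * f x v \<le> E1 x * chi k (f x v) + E2 x * f x v"
      by (simp add: algebra_simps)
    then show ?thesis
      using c E[of x] by (simp add: ennreal_plus[symmetric] del: ennreal_plus)
  qed
  then show ?thesis
    unfolding weighted_integral_def by (intro nn_integral_add_le_add) measurable
qed

definition cutoff :: "vec3 set \<Rightarrow> distrib \<Rightarrow> distrib" where
  "cutoff S f x v = indicator S x * f x v"

lemma borel_measurable_cutoff:
  assumes [measurable]: "S \<in> sets lborel" "(\<lambda>(x, v). f x v) \<in> borel_measurable (lborel \<Otimes>\<^sub>M lborel)"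
  shows "(\<lambda>(x, v). cutoff S f x v) \<in> borel_measurable (lborel \<Otimes>\<^sub>M lborel)"
  unfolding cutoff_def by measurable

lemma rho_cutoff: "rho (cutoff S f) x = indicator S x * rho f x"
  by (cases "x \<in> S") (simp_all add: rho_def cutoff_def)

lemma mass_cutoff_add:
  assumes [measurable]: "S \<in> sets lborel" "(\<lambda>(x, v). f x v) \<in> borel_measurable (lborel \<Otimes>\<^sub>M lborel)"
  shows "mass f = mass (cutoff S f) + mass (cutoff (- S) f)"
proof -
  have [measurable]: "rho f \<in> borel_measurable lborel" "- S \<in> sets lborel"
    using borel_measurable_rho[OF assms(2)] assms(1) by (simp_all add: borel_comp)
  have "mass f = (\<integral>\<^sup>+x. indicator S x * rho f x + indicator (- S) x * rho f x \<partial>lborel)"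
    unfolding mass_def by (intro nn_integral_cong) (simp add: indicator_def)
  also have "\<dots> = mass (cutoff S f) + mass (cutoff (- S) f)"
    unfolding mass_def rho_cutoff by (intro nn_integral_add) measurable
  finally show ?thesis .
qed

lemma DeltaM_nonneg [simp]: "0 \<le> DeltaM R g"
  by (simp add: DeltaM_def)

lemma DeltaM_eq_mass_cutoff: "DeltaM R g = enn2real (mass (cutoff (- ball 0 R) g))"
  unfolding DeltaM_def mass_def rho_cutoff
  by (intro arg_cong[where f = enn2real] nn_integral_cong) (simp add: indicator_def)

lemma weighted_integral_cutoff_le:
  "\<phi> 0 = 0 \<Longrightarrow> weighted_integral \<phi> E (cutoff S f) \<le> weighted_integral \<phi> E f"
  unfolding weighted_integral_def cutoff_def
  by (intro nn_integral_mono) (simp add: indicator_def)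

lemma weighted_integral_cutoff_add:
  assumes [measurable]: "S \<in> sets lborel" "(\<lambda>(x, v). f x v) \<in> borel_measurable (lborel \<Otimes>\<^sub>M lborel)"
    "E \<in> borel_measurable lborel" "\<phi> \<in> borel_measurable borel"
    and \<phi>: "\<phi> 0 = 0"
  shows "weighted_integral \<phi> E f = weighted_integral \<phi> E (cutoff S f) + weighted_integral \<phi> E (cutoff (- S) f)"
proof -
  have "weighted_integral \<phi> E f
      = (\<integral>\<^sup>+x. (\<integral>\<^sup>+v. ennreal (E x * \<phi> (cutoff S f x v)) \<partial>lborel)
              + (\<integral>\<^sup>+v. ennreal (E x * \<phi> (cutoff (- S) f x v)) \<partial>lborel) \<partial>lborel)"
    unfolding weighted_integral_def cutoff_def
    by (intro nn_integral_cong) (simp add: indicator_def \<phi>)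
  also have "\<dots> = weighted_integral \<phi> E (cutoff S f) + weighted_integral \<phi> E (cutoff (- S) f)"
    unfolding weighted_integral_def cutoff_def by (intro nn_integral_add) measurable
  finally show ?thesis .
qed

lemma exp_lambda_cutoff_ball:
  assumes "norm x < R"
  shows "exp_lambda (cutoff (ball 0 R) f) x = exp_lambda f x"
proof -
  have "m_enc (cutoff (ball 0 R) f) (norm x) = m_enc f (norm x)"
    unfolding m_enc_def rho_cutoff using assms
    by (intro nn_integral_cong) (auto simp: indicator_def)
  then show ?thesis
    by (simp add: exp_lambda_def lambda_f_def)
qed

lemma weighted_integral_cutoff_ball:
  "\<phi> 0 = 0 \<Longrightarrow> weighted_integral \<phi> (exp_lambda (cutoff (ball 0 R) f)) (cutoff (ball 0 R) f)
            = weighted_integral \<phi> (exp_lambda f) (cutoff (ball 0 R) f)"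
  unfolding weighted_integral_def
  by (intro nn_integral_cong) (auto simp: exp_lambda_cutoff_ball cutoff_def indicator_def)

lemma norm_SO3_mult: "A \<in> SO3 \<Longrightarrow> norm (A *v x) = norm x"
  unfolding SO3_def
  by (auto intro: orthogonal_transformation_norm simp: orthogonal_transformation_matrix)

lemma spherically_symmetric_cutoff_ball:
  "spherically_symmetric f \<Longrightarrow> spherically_symmetric (cutoff (ball 0 R) f)"
  unfolding spherically_symmetric_def cutoff_def
  by (simp add: indicator_def norm_SO3_mult)

definition dilate :: "real \<Rightarrow> distrib \<Rightarrow> distrib" where
  "dilate a f x v = f (x /\<^sub>R a) v"

lemma borel_measurable_dilate:
  assumes [measurable]: "(\<lambda>(x, v). f x v) \<in> borel_measurable (lborel \<Otimes>\<^sub>M lborel)"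
  shows "(\<lambda>(x, v). dilate a f x v) \<in> borel_measurable (lborel \<Otimes>\<^sub>M lborel)"
  unfolding dilate_def by measurable

lemma rho_dilate: "rho (dilate a f) x = rho f (x /\<^sub>R a)"
  by (simp add: rho_def dilate_def)

lemma spherically_symmetric_dilate:
  "spherically_symmetric f \<Longrightarrow> spherically_symmetric (dilate a f)"
  unfolding spherically_symmetric_def dilate_def
  by (simp add: matrix_vector_mult_scaleR[symmetric])

lemma mass_dilate:
  assumes "0 < a" "(\<lambda>(x, v). f x v) \<in> borel_measurable (lborel \<Otimes>\<^sub>M lborel)"
  shows "mass (dilate a f) = ennreal (a^3) * mass f"
  using nn_integral_dilate[of "rho f" a] borel_measurable_rho[OF assms(2)] assms(1)
  by (simp add: mass_def rho_dilate)

lemma m_enc_dilate: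
  assumes a: "0 < a" and f: "(\<lambda>(x, v). f x v) \<in> borel_measurable (lborel \<Otimes>\<^sub>M lborel)"
  shows "m_enc (dilate a f) (a * r) = ennreal (a^3) * m_enc f r"
proof -
  have [measurable]: "rho f \<in> borel_measurable borel" "cball (0::vec3) r \<in> sets borel"
    using borel_measurable_rho[OF f] by simp_all
  have "m_enc (dilate a f) (a * r) = (\<integral>\<^sup>+x. indicator (cball 0 r) (x /\<^sub>R a) * rho f (x /\<^sub>R a) \<partial>lborel)"
    unfolding m_enc_def rho_dilate using a
    by (intro nn_integral_cong) (auto simp: indicator_def field_simps)
  also have "\<dots> = ennreal (a^3) * m_enc f r"
    using nn_integral_dilate[of "\<lambda>y. indicator (cball 0 r) y * rho f y" a] a
    by (simp add: m_enc_def indicator_def)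
  finally show ?thesis .
qed

lemma admissible_dilate:
  assumes "0 < a" and [measurable]: "(\<lambda>(x, v). f x v) \<in> borel_measurable (lborel \<Otimes>\<^sub>M lborel)"
    and "\<And>x v. 0 \<le> f x v" "spherically_symmetric f" "\<And>x. rho f x \<le> ennreal \<sigma>0"
    and "ennreal (a^3) * mass f = ennreal M"
  shows "dilate a f \<in> admissible M \<sigma>0"
  using assms
  by (auto simp: admissible_def borel_measurable_dilate spherically_symmetric_dilate
      mass_dilate rho_dilate dilate_def)

(* Dilating by a >= 1 multiplies m(r)/r by a^2, so it can only increase lambda. *)
lemma exp_lambda_le_dilate:
  assumes a: "1 \<le> a" and f: "(\<lambda>(x, v). f x v) \<in> borel_measurable (lborel \<Otimes>\<^sub>M lborel)"
    and sub: "subcritical \<beta> (dilate a f)" and \<beta>: "\<beta> < 1/2"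
  shows "exp_lambda f y \<le> exp_lambda (dilate a f) (a *\<^sub>R y)"
proof (cases "y = 0")
  case False
  define r where "r = norm y"
  define u where "u = 2 * enn2real (m_enc f r) / r"
  have r: "0 < r"
    using False by (simp add: r_def)
  have u: "2 * enn2real (m_enc (dilate a f) (a * r)) / (a * r) = a^2 * u"
    using a r by (simp add: m_enc_dilate[OF _ f] u_def enn2real_mult power2_eq_square power3_eq_cube)
  have "2 * enn2real (m_enc (dilate a f) (a * r)) / (a * r) \<le> 2 * \<beta>"
    using sub a r by (simp add: subcritical_def divide_le_eq)
  then have "a^2 * u < 1"
    using u \<beta> by linarith
  moreover have "1 * u \<le> a^2 * u"
    using a r by (intro mult_right_mono) (simp_all add: u_def one_le_power)
  ultimately have "ln (1 - a^2 * u) \<le> ln (1 - u)"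
    by simp
  then have "lambda_f f r \<le> lambda_f (dilate a f) (a * r)"
    unfolding lambda_f_def u[symmetric] by (simp add: u_def)
  then show ?thesis
    using a by (simp add: exp_lambda_def r_def)
qed (use a in \<open>simp add: exp_lambda_def lambda_f_def\<close>)

lemma weighted_integral_dilate:
  assumes a: "0 < a" and [measurable]: "(\<lambda>(x, v). f x v) \<in> borel_measurable (lborel \<Otimes>\<^sub>M lborel)"
    "E \<in> borel_measurable lborel" "\<phi> \<in> borel_measurable borel"
  shows "weighted_integral \<phi> E (dilate a f) = ennreal (a^3) * weighted_integral \<phi> (\<lambda>y. E (a *\<^sub>R y)) f"
proof -
  have "(\<lambda>y. \<integral>\<^sup>+v. ennreal (E (a *\<^sub>R y) * \<phi> (f y v)) \<partial>lborel) \<in> borel_measurable lborel"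
    by measurable
  then have "(\<integral>\<^sup>+x. (\<lambda>y. \<integral>\<^sup>+v. ennreal (E (a *\<^sub>R y) * \<phi> (f y v)) \<partial>lborel) (x /\<^sub>R a) \<partial>lborel)
      = ennreal (a^3) * (\<integral>\<^sup>+y. \<integral>\<^sup>+v. ennreal (E (a *\<^sub>R y) * \<phi> (f y v)) \<partial>lborel \<partial>lborel)"
    using a by (subst nn_integral_dilate) simp_all
  then show ?thesis
    using a by (simp add: weighted_integral_def dilate_def)
qed

lemma admissible_subcritical:
  assumes "0 < M" "0 < \<beta>" "0 \<le> \<sigma>0" "\<sigma>0 \<le> 3 * \<beta>^3 / (4 * pi * M^2)" "f \<in> admissible M \<sigma>0"
  shows "subcritical \<beta> f"
  using assms by (intro subcritical_if_density_bounded[of M]) (auto simp: admissible_def)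

lemma weighted_integral_exp_lambda_le:
  assumes "(\<lambda>(x, v). f x v) \<in> borel_measurable (lborel \<Otimes>\<^sub>M lborel)" "\<And>x v. 0 \<le> f x v"
    and "subcritical \<beta> f" "0 \<le> \<beta>" "\<beta> < 1/2"
  shows "weighted_integral (\<lambda>s. s) (exp_lambda f) f \<le> ennreal (1 / sqrt (1 - 2 * \<beta>)) * mass f"
  by (intro weighted_integral_le_mass exp_lambda_nonneg exp_lambda_le[OF assms(3-5)] assms(1,2))

lemma weighted_integrals_finite:
  assumes k: "0 < k" and f: "(\<lambda>(x, v). f x v) \<in> borel_measurable (lborel \<Otimes>\<^sub>M lborel)"
    "\<And>x v. 0 \<le> f x v" "\<And>x v. f x v \<le> 1"
    and \<beta>: "subcritical \<beta> f" "0 \<le> \<beta>" "\<beta> < 1/2" and mass: "mass f < top"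
  shows "weighted_integral (chi k) (exp_lambda f) f < top"
    and "weighted_integral (\<lambda>s. s) (exp_lambda f) f < top"
proof -
  have "weighted_integral (\<lambda>s. s) (exp_lambda f) f \<le> ennreal (1 / sqrt (1 - 2 * \<beta>)) * mass f"
    by (rule weighted_integral_exp_lambda_le[OF f(1,2) \<beta>])
  also have "\<dots> < top"
    using mass by (simp add: ennreal_mult_less_top)
  finally show fin: "weighted_integral (\<lambda>s. s) (exp_lambda f) f < top" .
  show "weighted_integral (chi k) (exp_lambda f) f < top"
    using weighted_integral_chi_le[OF k exp_lambda_nonneg f(2,3)] fin by (rule le_less_trans)
qed

lemma Dfun_lower_bound:
  assumes M: "0 \<le> M" and f: "f \<in> admissible M \<sigma>0"
    and \<beta>: "subcritical \<beta> f" "0 \<le> \<beta>" "\<beta> < 1/2"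
  shows "ereal (- (M / sqrt (1 - 2 * \<beta>))) \<le> Dfun k f"
proof -
  let ?N = "weighted_integral (\<lambda>s. s) (exp_lambda f) f"
  have f_props: "(\<lambda>(x, v). f x v) \<in> borel_measurable (lborel \<Otimes>\<^sub>M lborel)" "\<And>x v. 0 \<le> f x v"
    "mass f = ennreal M"
    using f by (auto simp: admissible_def)
  have "?N \<le> ennreal (1 / sqrt (1 - 2 * \<beta>)) * ennreal M"
    using weighted_integral_exp_lambda_le[OF f_props(1,2) \<beta>] f_props(3) by simp
  also have "\<dots> = ennreal (M / sqrt (1 - 2 * \<beta>))"
    using \<beta> by (subst ennreal_mult'[symmetric]) simp_all
  finally have N: "?N \<le> ennreal (M / sqrt (1 - 2 * \<beta>))" .
  then have "enn2real ?N \<le> M / sqrt (1 - 2 * \<beta>)"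
    using M \<beta> by (intro enn2real_leI) auto
  moreover have "Dfun k f = enn2ereal (weighted_integral (chi k) (exp_lambda f) f) - ereal (enn2real ?N)"
    using N by (simp add: Dfun_eq_weighted_integral enn2ereal_eq_ereal_enn2real le_less_trans)
  ultimately show ?thesis
    using enn2ereal_nonneg[of "weighted_integral (chi k) (exp_lambda f) f"]
    by (cases "enn2ereal (weighted_integral (chi k) (exp_lambda f) f)") auto
qed

lemma mass_cutoff_outside:
  assumes "(\<lambda>(x, v). g x v) \<in> borel_measurable (lborel \<Otimes>\<^sub>M lborel)" "mass g < top"
  shows "mass (cutoff (- ball 0 R) g) = ennreal (DeltaM R g)"
  using mass_cutoff_add[of "ball 0 R" g] assms by (simp add: DeltaM_eq_mass_cutoff)

lemma mass_cutoff_ball: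
  assumes "(\<lambda>(x, v). g x v) \<in> borel_measurable (lborel \<Otimes>\<^sub>M lborel)" "mass g = ennreal M"
  shows "mass (cutoff (ball 0 R) g) = ennreal (M - DeltaM R g)"
proof -
  have "ennreal M = mass (cutoff (ball 0 R) g) + ennreal (DeltaM R g)"
    using mass_cutoff_add[of "ball 0 R" g] mass_cutoff_outside[of g R] assms by simp
  then show ?thesis
    by (simp add: ennreal_minus[symmetric])
qed

lemma weighted_integral_outside_le:
  assumes g: "(\<lambda>(x, v). g x v) \<in> borel_measurable (lborel \<Otimes>\<^sub>M lborel)" "\<And>x v. 0 \<le> g x v"
    and mass: "mass g \<le> ennreal M" "0 \<le> M"
    and q: "1 < q" and R: "2 * M / (1 - 1 / q^2) \<le> R" "0 < R"
  shows "weighted_integral (\<lambda>s. s) (exp_lambda g) (cutoff (- ball 0 R) g) \<le> ennreal (q * DeltaM R g)"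
proof -
  have "weighted_integral (\<lambda>s. s) (exp_lambda g) (cutoff (- ball 0 R) g)
      \<le> ennreal q * mass (cutoff (- ball 0 R) g)"
    using exp_lambda_le_outside[OF mass(2) q mass(1) R] g
    by (intro weighted_integral_le_mass exp_lambda_nonneg borel_measurable_cutoff)
      (auto simp: cutoff_def indicator_def of_bool_def not_less split: if_splits)
  also have "\<dots> = ennreal (q * DeltaM R g)"
    using mass_cutoff_outside[OF g(1)] mass(1) q by (simp add: ennreal_mult' le_less_trans)
  finally show ?thesis .
qed

lemma INF_Dfun_finite:
  assumes M: "0 < M" and \<beta>: "0 < \<beta>" "\<beta> < 1/2" and \<sigma>: "0 \<le> \<sigma>0" "\<sigma>0 \<le> 3 * \<beta>^3 / (4 * pi * M^2)"
    and h: "h \<in> admissible M \<sigma>0" "Dfun k h \<le> ereal c"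
  obtains i where "(INF f \<in> admissible M \<sigma>0. Dfun k f) = ereal i" "i \<le> c"
proof -
  have "ereal (- (M / sqrt (1 - 2 * \<beta>))) \<le> (INF f \<in> admissible M \<sigma>0. Dfun k f)"
    using M \<beta> \<sigma> by (intro INF_greatest Dfun_lower_bound admissible_subcritical) auto
  moreover have "(INF f \<in> admissible M \<sigma>0. Dfun k f) \<le> ereal c"
    using INF_lower[OF h(1), of "Dfun k"] h(2) by (rule order_trans)
  ultimately show ?thesis
    using that by (cases "INF f \<in> admissible M \<sigma>0. Dfun k f") auto
qed

lemma Dfun_cutoff_ball_le:
  assumes k: "0 < k" and g [measurable]: "(\<lambda>(x, v). g x v) \<in> borel_measurable (lborel \<Otimes>\<^sub>M lborel)"
    and g_bounds: "\<And>x v. 0 \<le> g x v" "\<And>x v. g x v \<le> 1"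
    and mass: "mass g \<le> ennreal M" "0 \<le> M"
    and \<beta>: "subcritical \<beta> g" "0 \<le> \<beta>" "\<beta> < 1/2"
    and q: "1 < q" and R: "2 * M / (1 - 1 / q^2) \<le> R" "0 < R"
  shows "Dfun k (cutoff (ball 0 R) g) \<le> Dfun k g + ereal (q * DeltaM R g)"
proof -
  let ?E = "exp_lambda g" and ?B = "ball (0::vec3) R"
  let ?P = "weighted_integral (chi k) ?E" and ?N = "weighted_integral (\<lambda>s. s) ?E"
  have mass_fin: "mass g < top"
    using mass(1) by (rule le_less_trans) simp
  have [measurable]: "?E \<in> borel_measurable lborel" "?B \<in> sets lborel"
    using borel_measurable_exp_lambda[OF mass_fin] by simp_all
  have fin: "?P g < top" "?N g < top"
    using weighted_integrals_finite[OF k g g_bounds \<beta> mass_fin] by auto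
  have P: "?P (cutoff ?B g) \<le> ?P g"
    by (simp add: weighted_integral_cutoff_le)
  have N: "?N g = ?N (cutoff ?B g) + ?N (cutoff (- ?B) g)"
    by (rule weighted_integral_cutoff_add) simp_all
  have out: "enn2real (?N (cutoff (- ?B) g)) \<le> q * DeltaM R g"
    using weighted_integral_outside_le[OF g g_bounds(1) mass q R] q by (intro enn2real_leI) simp_all
  have "Dfun k (cutoff ?B g) = ereal (enn2real (?P (cutoff ?B g)) - enn2real (?N (cutoff ?B g)))"
    using Dfun_eq_ereal[of k "cutoff ?B g"] fin P N
    by (simp add: weighted_integral_cutoff_ball le_less_trans)
  also have "\<dots> \<le> ereal (enn2real (?P g) - enn2real (?N g) + q * DeltaM R g)"
  proof -
    have "enn2real (?P (cutoff ?B g)) \<le> enn2real (?P g)"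
      using P fin(1) by (rule enn2real_mono)
    moreover have "enn2real (?N g) = enn2real (?N (cutoff ?B g)) + enn2real (?N (cutoff (- ?B) g))"
      using N fin(2) by (simp add: enn2real_plus)
    ultimately show ?thesis
      using out by simp
  qed
  also have "\<dots> = Dfun k g + ereal (q * DeltaM R g)"
    using fin by (simp add: Dfun_eq_ereal)
  finally show ?thesis .
qed

lemma Dfun_dilate_le:
  assumes k: "0 < k" and a: "1 \<le> a"
    and f [measurable]: "(\<lambda>(x, v). f x v) \<in> borel_measurable (lborel \<Otimes>\<^sub>M lborel)"
    and f_bounds: "\<And>x v. 0 \<le> f x v" "\<And>x v. f x v \<le> 1" and mass: "mass f < top"
    and \<beta>: "subcritical \<beta> f" "subcritical \<beta> (dilate a f)" "0 \<le> \<beta>" "\<beta> < 1/2"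
  shows "Dfun k (dilate a f) \<le> ereal (a^3) * Dfun k f"
proof -
  let ?fa = "dilate a f"
  let ?Ea = "\<lambda>y. exp_lambda ?fa (a *\<^sub>R y)" and ?E = "exp_lambda f"
  let ?Pa = "weighted_integral (chi k) ?Ea f" and ?Na = "weighted_integral (\<lambda>s. s) ?Ea f"
  let ?P = "weighted_integral (chi k) ?E f" and ?N = "weighted_integral (\<lambda>s. s) ?E f"
  have a0: "0 < a"
    using a by simp
  have fa_mass: "mass ?fa < top"
    using mass a0 by (simp add: mass_dilate ennreal_mult_less_top)
  have [measurable]: "?E \<in> borel_measurable lborel" "exp_lambda ?fa \<in> borel_measurable lborel"
    using borel_measurable_exp_lambda mass fa_mass by blast+
  have fa_bounds: "\<And>x v. 0 \<le> ?fa x v" "\<And>x v. ?fa x v \<le> 1"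
    using f_bounds by (simp_all add: dilate_def)
  have fin_fa: "ennreal (a^3) * ?Pa < top" "ennreal (a^3) * ?Na < top"
    using weighted_integrals_finite[OF k borel_measurable_dilate[OF f] fa_bounds \<beta>(2-4) fa_mass]
    by (simp_all add: weighted_integral_dilate[OF a0])
  then have fin_a: "?Pa < top" "?Na < top"
    using a0 by (auto simp: ennreal_mult_less_top)
  have fin: "?P < top" "?N < top"
    using weighted_integrals_finite[OF k f f_bounds \<beta>(1,3,4) mass] by simp_all
  have "?Pa + ?N \<le> ?P + ?Na"
    using exp_lambda_le_dilate[OF a f \<beta>(2,4)]
    by (intro weighted_integral_rearrange k f f_bounds exp_lambda_nonneg) measurable
  then have "enn2real ?Pa - enn2real ?Na \<le> enn2real ?P - enn2real ?N"
    using fin fin_a enn2real_mono[of "?Pa + ?N" "?P + ?Na"] by (simp add: enn2real_plus)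
  then have "a^3 * (enn2real ?Pa - enn2real ?Na) \<le> a^3 * (enn2real ?P - enn2real ?N)"
    using a0 by simp
  moreover have "Dfun k ?fa = ereal (a^3 * (enn2real ?Pa - enn2real ?Na))"
    using Dfun_eq_ereal[of k ?fa] fin_fa a0
    by (simp add: weighted_integral_dilate[OF a0] enn2real_mult right_diff_distrib)
  moreover have "Dfun k f = ereal (enn2real ?P - enn2real ?N)"
    using fin by (rule Dfun_eq_ereal)
  ultimately show ?thesis
    by simp
qed

lemma rescaled_cutoff_Dfun_le:
  assumes k: "0 < k" and M: "0 < M" and \<beta>: "0 < \<beta>" "\<beta> < 1/2"
    and \<sigma>: "0 \<le> \<sigma>0" "\<sigma>0 \<le> 3 * \<beta>^3 / (4 * pi * M^2)"
    and g: "g \<in> admissible M \<sigma>0" "\<And>x v. g x v \<le> 1"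
    and q: "1 < q" and R: "2 * M / (1 - 1 / q^2) \<le> R" "0 < R" and escape: "DeltaM R g < M"
  shows "\<exists>f \<in> admissible M \<sigma>0.
           Dfun k f \<le> ereal (M / (M - DeltaM R g)) * (Dfun k g + ereal (q * DeltaM R g))"
proof -
  let ?d = "DeltaM R g" and ?g1 = "cutoff (ball 0 R) g"
  define a where "a = root 3 (M / (M - ?d))"
  have a3: "a^3 = M / (M - ?d)" and a: "1 \<le> a"
    using M escape by (simp_all add: a_def)
  have g_meas [measurable]: "(\<lambda>(x, v). g x v) \<in> borel_measurable (lborel \<Otimes>\<^sub>M lborel)"
    and g_props: "\<And>x v. 0 \<le> g x v" "spherically_symmetric g" "mass g = ennreal M" "\<And>x. rho g x \<le> ennreal \<sigma>0"
    using g by (auto simp: admissible_def)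
  have g1_props: "(\<lambda>(x, v). ?g1 x v) \<in> borel_measurable (lborel \<Otimes>\<^sub>M lborel)"
    "\<And>x v. 0 \<le> ?g1 x v" "\<And>x v. ?g1 x v \<le> 1" "spherically_symmetric ?g1" "\<And>x. rho ?g1 x \<le> ennreal \<sigma>0"
    using g_meas g_props g(2)
    by (auto simp: borel_measurable_cutoff spherically_symmetric_cutoff_ball rho_cutoff cutoff_def
        indicator_def intro: order_trans)
  have g1_mass: "mass ?g1 = ennreal (M - ?d)"
    using mass_cutoff_ball[OF g_meas g_props(3)] .
  have fa: "dilate a ?g1 \<in> admissible M \<sigma>0"
    using a3 a M escape g1_mass
    by (intro admissible_dilate g1_props) (simp_all add: ennreal_mult[symmetric])
  have g1_sub: "subcritical \<beta> ?g1"
    using g1_props g1_mass M \<beta> \<sigma> escape by (intro subcritical_if_density_bounded[of M]) auto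
  have "Dfun k (dilate a ?g1) \<le> ereal (a^3) * Dfun k ?g1"
    using g1_mass admissible_subcritical[OF M \<beta>(1) \<sigma> fa] \<beta>
    by (intro Dfun_dilate_le[OF k a g1_props(1-3) _ g1_sub]) auto
  also have "\<dots> \<le> ereal (a^3) * (Dfun k g + ereal (q * ?d))"
    using g_meas g_props g(2) M \<beta> q R a admissible_subcritical[OF M \<beta>(1) \<sigma> g(1)]
    by (intro ereal_mult_left_mono Dfun_cutoff_ball_le k) auto
  finally show ?thesis
    using fa a3 by auto
qed

lemma near_minimizer_no_partial_escape:
  assumes k: "0 < k" and M: "0 < M" and \<beta>: "0 < \<beta>" "\<beta> < 1/2"
    and \<sigma>: "0 \<le> \<sigma>0" "\<sigma>0 \<le> 3 * \<beta>^3 / (4 * pi * M^2)"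
    and i_lower: "\<And>f. f \<in> admissible M \<sigma>0 \<Longrightarrow> ereal i \<le> Dfun k f" and i_upper: "i \<le> - (M + \<delta>)"
    and \<delta>: "0 < \<delta>" and \<eta>: "\<eta> \<le> \<delta> / (6 * M)"
    and R: "2 * M / (1 - 1 / (1 + \<delta> / (6 * M))^2) \<le> R" "0 < R"
    and g: "g \<in> admissible M \<sigma>0" "\<And>x v. g x v \<le> 1" "Dfun k g \<le> ereal (i + \<eta> * DeltaM R g)"
  shows "\<not> (0 < DeltaM R g \<and> DeltaM R g < M)"
proof
  let ?d = "DeltaM R g"
  define q where "q = 1 + \<delta> / (6 * M)"
  assume d: "0 < ?d \<and> ?d < M"
  have q: "1 < q"
    using \<delta> M by (simp add: q_def)
  obtain f where "f \<in> admissible M \<sigma>0" and f: "Dfun k f \<le> ereal (M / (M - ?d)) * (Dfun k g + ereal (q * ?d))"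
    using rescaled_cutoff_Dfun_le[OF k M \<beta> \<sigma> g(1,2) q _ R(2)] R(1) d by (auto simp: q_def)
  have "ereal i \<le> Dfun k f"
    by (rule i_lower) fact
  also have "\<dots> \<le> ereal (M / (M - ?d)) * (Dfun k g + ereal (q * ?d))"
    by (rule f)
  also have "\<dots> \<le> ereal (M / (M - ?d)) * (ereal (i + \<eta> * ?d) + ereal (q * ?d))"
    using g(3) d M by (intro ereal_mult_left_mono add_right_mono) simp_all
  finally have "i \<le> M / (M - ?d) * (i + \<eta> * ?d + q * ?d)"
    by simp
  then have "i * (M - ?d) \<le> M * (i + \<eta> * ?d + q * ?d)"
    using d by (simp add: pos_le_divide_eq)
  then have "- i * ?d \<le> (M * \<eta> + M * q) * ?d"
    by (simp add: algebra_simps)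
  then have "- i \<le> M * \<eta> + M * q"
    using mult_right_le_imp_le[of "- i" ?d] d by simp
  moreover have "M * \<eta> \<le> \<delta> / 6" and "M * q = M + \<delta> / 6"
    using \<eta> M by (simp_all add: q_def field_simps)
  ultimately show False
    using i_upper \<delta> by linarith
qed

lemma exists_index_near_limits:
  fixes D :: "nat \<Rightarrow> ereal" and \<Delta> :: "nat \<Rightarrow> real"
  assumes D: "D \<longlonglongrightarrow> ereal i" and \<Delta>: "\<Delta> \<longlonglongrightarrow> \<epsilon>" and \<epsilon>: "0 < \<epsilon>" "\<epsilon> < M" and \<eta>: "0 < \<eta>"
  shows "\<exists>n. D n \<le> ereal (i + \<eta> * \<Delta> n) \<and> 0 < \<Delta> n \<and> \<Delta> n < M"
proof -
  have "ereal i < ereal (i + \<eta> * (\<epsilon> / 2))"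
    using \<eta> \<epsilon> by simp
  with D have "eventually (\<lambda>n. D n < ereal (i + \<eta> * (\<epsilon> / 2))) sequentially"
    by (rule order_tendstoD(2))
  moreover have "eventually (\<lambda>n. \<epsilon> / 2 < \<Delta> n \<and> \<Delta> n < M) sequentially"
    using \<Delta> \<epsilon> by (intro eventually_conj order_tendstoD) auto
  ultimately have "eventually (\<lambda>n. D n \<le> ereal (i + \<eta> * \<Delta> n) \<and> 0 < \<Delta> n \<and> \<Delta> n < M) sequentially"
  proof eventually_elim
    case (elim n)
    have "ereal (i + \<eta> * (\<epsilon> / 2)) \<le> ereal (i + \<eta> * \<Delta> n)"
      using elim \<eta> by simp
    with elim(1) have "D n < ereal (i + \<eta> * \<Delta> n)"
      by (rule less_le_trans)
    then show ?case
      using elim \<epsilon> by simp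
  qed
  then show ?thesis
    by (rule eventually_happens'[OF trivial_limit_sequentially])
qed

theorem corollary5p4:
  fixes k M \<beta> \<sigma>0 \<delta> :: real and h :: distrib and I :: ereal and \<eta> :: real
  assumes hk: "0 < k" "k \<le> 2"
    and hM: "0 < M"
    and h\<beta>: "0 < \<beta>" "\<beta> < 1/2"
    and h\<sigma>: "0 < \<sigma>0" "\<sigma>0 \<le> min 1 (3 * \<beta>^3 / (4 * pi * M^2))"
    and hI: "I = (INF f \<in> admissible M \<sigma>0. Dfun k f)"
    and hh: "h \<in> admissible M \<sigma>0" "Dfun k h < 0"
    and h\<delta>: "0 < \<delta>" "\<bar>Dfun k h\<bar> \<ge> ereal (M + \<delta>)"
    and h\<eta>: "\<eta> = min 1 (\<delta> / (6 * M))"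
  shows "(\<forall>R g. R \<ge> max (8 * M / 3) (2 * M / (1 - 1 / (1 + \<delta> / (6 * M))^2))
            \<longrightarrow> g \<in> admissible M \<sigma>0 \<longrightarrow> (\<forall>x v. g x v \<le> 1)
            \<longrightarrow> Dfun k g \<le> I + ereal (\<eta> * DeltaM R g)
            \<longrightarrow> 0 < DeltaM R g \<longrightarrow> DeltaM R g < M
            \<longrightarrow> DeltaM R g \<ge> \<delta> / 18)
       \<and> (\<forall>(fs :: nat \<Rightarrow> distrib) (Rs :: nat \<Rightarrow> real) \<epsilon>0.
            (\<forall>n. fs n \<in> admissible M \<sigma>0) \<longrightarrow> (\<lambda>n. Dfun k (fs n)) \<longlonglongrightarrow> I
            \<longrightarrow> (\<forall>n x v. fs n x v \<le> 1)
            \<longrightarrow> (\<forall>n. Rs n \<ge> max (8 * M / 3) (2 * M / (1 - (1 + \<delta> / (6 * M)) powr (-2))))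
            \<longrightarrow> (\<lambda>n. DeltaM (Rs n) (fs n)) \<longlonglongrightarrow> \<epsilon>0
            \<longrightarrow> 0 < \<epsilon>0 \<longrightarrow> \<epsilon>0 < M
            \<longrightarrow> \<epsilon>0 \<ge> \<delta> / 18)"
proof -
  have \<sigma>: "0 \<le> \<sigma>0" "\<sigma>0 \<le> 3 * \<beta>^3 / (4 * pi * M^2)"
    using h\<sigma> by simp_all
  have "Dfun k h \<le> ereal (- (M + \<delta>))"
    using hh(2) h\<delta>(2) by (cases "Dfun k h") auto
  then obtain i where I: "I = ereal i" and i: "i \<le> - (M + \<delta>)"
    using INF_Dfun_finite[OF hM h\<beta> \<sigma> hh(1)] unfolding hI by blast
  have i_lower: "ereal i \<le> Dfun k f" if "f \<in> admissible M \<sigma>0" for f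
    using INF_lower[OF that, of "Dfun k"] hI I by simp
  have \<eta>: "0 < \<eta>" "\<eta> \<le> \<delta> / (6 * M)"
    using h\<eta> h\<delta>(1) hM by auto
  have no_escape: "\<not> (0 < DeltaM R g \<and> DeltaM R g < M)"
    if "R \<ge> max (8 * M / 3) (2 * M / (1 - 1 / (1 + \<delta> / (6 * M))^2))" "g \<in> admissible M \<sigma>0"
      "\<forall>x v. g x v \<le> 1" "Dfun k g \<le> I + ereal (\<eta> * DeltaM R g)" for R g
    using that hM I
    by (intro near_minimizer_no_partial_escape[OF hk(1) hM h\<beta> \<sigma> i_lower i h\<delta>(1) \<eta>(2)]) auto
  have powr: "(1 + \<delta> / (6 * M)) powr (-2) = 1 / (1 + \<delta> / (6 * M))^2"
    using h\<delta>(1) hM by (simp add: powr_minus_divide powr_numeral add_pos_pos)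
  show ?thesis
  proof (intro conjI allI impI)
    fix R g
    assume "R \<ge> max (8 * M / 3) (2 * M / (1 - 1 / (1 + \<delta> / (6 * M))^2))" "g \<in> admissible M \<sigma>0"
      "\<forall>x v. g x v \<le> 1" "Dfun k g \<le> I + ereal (\<eta> * DeltaM R g)" "0 < DeltaM R g" "DeltaM R g < M"
    with no_escape show "DeltaM R g \<ge> \<delta> / 18"
      by blast
  next
    fix fs :: "nat \<Rightarrow> distrib" and Rs :: "nat \<Rightarrow> real" and \<epsilon>0
    assume fs: "\<forall>n. fs n \<in> admissible M \<sigma>0" "(\<lambda>n. Dfun k (fs n)) \<longlonglongrightarrow> I" "\<forall>n x v. fs n x v \<le> 1"
      and Rs: "\<forall>n. Rs n \<ge> max (8 * M / 3) (2 * M / (1 - (1 + \<delta> / (6 * M)) powr (-2)))"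
      and \<epsilon>0: "(\<lambda>n. DeltaM (Rs n) (fs n)) \<longlonglongrightarrow> \<epsilon>0" "0 < \<epsilon>0" "\<epsilon>0 < M"
    obtain n where "Dfun k (fs n) \<le> I + ereal (\<eta> * DeltaM (Rs n) (fs n))"
      and "0 < DeltaM (Rs n) (fs n) \<and> DeltaM (Rs n) (fs n) < M"
      using exists_index_near_limits[OF fs(2)[unfolded I] \<epsilon>0 \<eta>(1)] I by auto
    with no_escape[of "Rs n" "fs n"] fs Rs powr show "\<epsilon>0 \<ge> \<delta> / 18"
      by simp
  qed
qed

end
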